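(* Let $n\ge1$ and let $\mathcal{G}_n\subset GL_n(\mathbb{Z})$ be the group generated by the linear maps $\sigma_1,\dotsc,\sigma_n$ of $\mathbb{Z}^n$ which, in coordinates $x=(x_1,\dotsc,x_n)$, are \[ \sigma_1:\ x_{2i}\mapsto x_{2i}+x_1,\quad x_{2i-1}\mapsto x_{2i-1}\quad(\text{all admissible } i), \] \[ \sigma_i\ (2\le i\le n):\ x_{i-1}\mapsto x_{i-2}+x_{i-1}-x_i,\quad x_j\mapsto x_j\ (j\ne i-1), \] with the convention $x_0=0$. Let \[ J(x,y)=\sum_{i=1}^{n-1}\left(x_iy_{i+1}-x_{i+1}y_i\right). \] If $n$ is even, then $J$ is non-degenerate and $J(gx,gy)=J(x,y)$ for all $g\in\mathcal{G}_n$ and all $x,y$. If $n$ is odd, then $J(\sigma_ix,\sigma_iy)=J(x,y)$ for all $i\ge2$ and all $x,y$, and the kernel of $J$ (the set of $x$ with $J(x,y)=0$ for all $y$, as a form on $\mathbb{Q}^n$) is one-dimensional.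
   Context: These coordinates arise as follows: if $k=(k_1,\dotsc,k_n)$ and $x_i=k_i-k_{i-1}+k_{i-2}-\dotsb+(-1)^{i+1}k_1$ (equivalently $k_i=x_{i-1}+x_i$, $x_0=0$), then the maps above are the maps $\sigma_1: k_1\mapsto k_1,\ k_j\mapsto k_j+k_1\ (j>1)$ and, for $i\ge2$, $\sigma_i: k_{i-1}\mapsto 2k_{i-1}-k_i,\ k_i\mapsto k_{i-1},\ k_j\mapsto k_j\ (j\ne i-1,i)$. *)

theory Defs
  imports Complex_Main
begin

text \<open>Vectors of Z^n (or Q^n) are modelled as functions nat => 'a whose
  components are indexed by 1..n and vanish outside {1..n}.\<close>

definition vecs :: "nat \<Rightarrow> (nat \<Rightarrow> 'a::zero) set" where
  "vecs n = {x. \<forall>j. (j < 1 \<or> n < j) \<longrightarrow> x j = 0}"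

definition sigma :: "nat \<Rightarrow> nat \<Rightarrow> (nat \<Rightarrow> int) \<Rightarrow> (nat \<Rightarrow> int)" where
  "sigma n i x = (\<lambda>j.
     if j < 1 \<or> n < j then 0
     else if i = 1 then (if even j then x j + x 1 else x j)
     else if j = i - 1 then (if i = 2 then 0 else x (i - 2)) + x (i - 1) - x i
     else x j)"

inductive_set Ggroup :: "nat \<Rightarrow> ((nat \<Rightarrow> int) \<Rightarrow> (nat \<Rightarrow> int)) set" for n where
  id_in: "(\<lambda>x. x) \<in> Ggroup n"
| gen: "g \<in> Ggroup n \<Longrightarrow> 1 \<le> i \<Longrightarrow> i \<le> n \<Longrightarrow> sigma n i \<circ> g \<in> Ggroup n"
| gen_inv: "g \<in> Ggroup n \<Longrightarrow> 1 \<le> i \<Longrightarrow> i \<le> n \<Longrightarrow>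
     the_inv_into (vecs n) (sigma n i) \<circ> g \<in> Ggroup n"

definition J :: "nat \<Rightarrow> (nat \<Rightarrow> 'a::comm_ring) \<Rightarrow> (nat \<Rightarrow> 'a) \<Rightarrow> 'a" where
  "J n x y = (\<Sum>i = 1..n - 1. x i * y (i + 1) - x (i + 1) * y i)"

definition Jker :: "nat \<Rightarrow> (nat \<Rightarrow> rat) set" where
  "Jker n = {x \<in> vecs n. \<forall>y \<in> vecs n. J n x y = 0}"

end

theory Submission
  imports Defs "HOL-Library.Indicator_Function"
begin

(* Since x vanishes outside 1..n, J(x, y) = sum_j (x_(j-1) - x_(j+1)) y_j.  Hence each sigma_i
   with i >= 2 is the symplectic transvection x |-> x + J(x, u) u for u = e_(i-1), and for even n
   so is sigma_1, with u = e_2 + e_4 + ... + e_n.  A transvection x |-> x + c J(x, u) u preserves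
   the alternating form J and its inverse is the transvection with -c, so the whole group
   preserves J.  The same formula shows that x lies in the kernel iff x_(k-1) = x_(k+1) for
   1 <= k <= n, with x_0 = x_(n+1) = 0: x vanishes at even indices and is constant at odd ones.
   For even n the index n + 1 is odd, forcing x = 0; for odd n the kernel is spanned by
   e_1 + e_3 + ... + e_n. *)

lemma vecs_outside:
  "x \<in> vecs n \<Longrightarrow> j \<notin> {1..n} \<Longrightarrow> x j = 0"
  by (cases j) (auto simp: vecs_def)

lemma J_eq_sum_left:
  fixes x y :: "nat \<Rightarrow> 'a::comm_ring"
  assumes "x \<in> vecs n"
  shows "J n x y = (\<Sum>j = 1..n. (x (j - 1) - x (j + 1)) * y j)"
proof (cases n)
  case 0
  then show ?thesis by (simp add: J_def)
next
  case (Suc m)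
  have x0: "x 0 = 0" and xn: "x (m + 2) = 0" using assms by (auto simp: vecs_def Suc)
  have "(\<Sum>j = 1..Suc m. x (j - 1) * y j) = (\<Sum>i = 0..m. x i * y (i + 1))"
    using sum.shift_bounds_cl_Suc_ivl[of "\<lambda>j. x (j - 1) * y j" 0 m] by simp
  also have "\<dots> = (\<Sum>i = 1..m. x i * y (i + 1))"
    using x0 by (simp add: sum.atLeast_Suc_atMost)
  finally have "(\<Sum>j = 1..Suc m. x (j - 1) * y j) = (\<Sum>i = 1..m. x i * y (i + 1))" .
  moreover have "(\<Sum>j = 1..Suc m. x (j + 1) * y j) = (\<Sum>i = 1..m. x (i + 1) * y i)"
    using xn by simp
  ultimately show ?thesis by (simp add: J_def Suc sum_subtractf left_diff_distrib)
qed

lemma J_antisym: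
  fixes x y :: "nat \<Rightarrow> 'a::comm_ring"
  shows "J n x y = - J n y x"
  unfolding J_def by (simp add: sum_negf[symmetric] algebra_simps)

lemma J_self:
  fixes x :: "nat \<Rightarrow> 'a::comm_ring"
  shows "J n x x = 0"
  unfolding J_def by (simp add: mult.commute)

lemma J_eq_sum_right:
  fixes x y :: "nat \<Rightarrow> 'a::comm_ring"
  assumes "y \<in> vecs n"
  shows "J n x y = (\<Sum>j = 1..n. x j * (y (j + 1) - y (j - 1)))"
  using J_antisym[of n x y] J_eq_sum_left[OF assms, of x]
  by (simp add: sum_negf[symmetric] algebra_simps)

lemma J_add_multiples:
  fixes x y u :: "nat \<Rightarrow> 'a::comm_ring"
  shows "J n (\<lambda>j. x j + a * u j) (\<lambda>j. y j + b * u j) = J n x y + b * J n x u - a * J n y u"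
  unfolding J_def
  by (simp add: sum_distrib_left sum_subtractf[symmetric] sum.distrib[symmetric] algebra_simps)

definition transvection :: "nat \<Rightarrow> 'a \<Rightarrow> (nat \<Rightarrow> 'a) \<Rightarrow> (nat \<Rightarrow> 'a) \<Rightarrow> nat \<Rightarrow> 'a::comm_ring"
  where "transvection n c u x = (\<lambda>j. x j + c * J n x u * u j)"

lemma J_transvection:
  "J n (transvection n c u x) (transvection n c u y) = J n x y"
  unfolding transvection_def J_add_multiples by (simp add: algebra_simps)

lemma J_transvection_axis: "J n (transvection n c u x) u = J n x u"
  using J_add_multiples[of n x "c * J n x u" u u 0] by (simp add: transvection_def J_self)

lemma transvection_inverse: "transvection n c u (transvection n (- c) u x) = x"
  using J_transvection_axis[of n "- c" u x] by (simp add: transvection_def)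

lemma transvection_vecs:
  "u \<in> vecs n \<Longrightarrow> x \<in> vecs n \<Longrightarrow> transvection n c u x \<in> vecs n"
  by (simp add: vecs_def transvection_def)

definition preserves_J :: "nat \<Rightarrow> ((nat \<Rightarrow> 'a) \<Rightarrow> nat \<Rightarrow> 'a::comm_ring) \<Rightarrow> bool" where
  "preserves_J n f \<longleftrightarrow>
     (\<forall>x \<in> vecs n. f x \<in> vecs n) \<and> (\<forall>x \<in> vecs n. \<forall>y \<in> vecs n. J n (f x) (f y) = J n x y)"

lemma preserves_J_id: "preserves_J n (\<lambda>x. x)"
  by (simp add: preserves_J_def)

lemma preserves_J_comp: "preserves_J n f \<Longrightarrow> preserves_J n g \<Longrightarrow> preserves_J n (f \<circ> g)"
  by (auto simp: preserves_J_def)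

lemma preserves_J_transvection: "u \<in> vecs n \<Longrightarrow> preserves_J n (transvection n c u)"
  by (auto simp: preserves_J_def transvection_vecs J_transvection)

lemma preserves_J_cong:
  "preserves_J n f \<Longrightarrow> (\<And>x. x \<in> vecs n \<Longrightarrow> g x = f x) \<Longrightarrow> preserves_J n g"
  by (auto simp: preserves_J_def)

lemma the_inv_into_transvection:
  assumes u: "u \<in> vecs n" and f: "\<And>x. x \<in> vecs n \<Longrightarrow> f x = transvection n 1 u x"
    and x: "x \<in> vecs n"
  shows "the_inv_into (vecs n) f x = transvection n (- 1) u x"
proof (rule the_inv_into_f_eq)
  show "inj_on f (vecs n)"
  proof (rule inj_onI)
    fix y z assume "y \<in> vecs n" "z \<in> vecs n" "f y = f z"
    then have "transvection n (- 1) u (transvection n 1 u y)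
             = transvection n (- 1) u (transvection n 1 u z)"
      by (simp add: f)
    then show "y = z"
      using transvection_inverse[of n "- 1" u] by simp
  qed
  show "transvection n (- 1) u x \<in> vecs n"
    using u x by (rule transvection_vecs)
  then show "f (transvection n (- 1) u x) = x"
    using transvection_inverse[of n 1 u x] by (simp add: f)
qed

lemma indicator_vecs: "A \<subseteq> {1..n} \<Longrightarrow> indicator A \<in> vecs n"
  by (auto simp: vecs_def indicator_def)

lemma J_indicator_right:
  fixes x :: "nat \<Rightarrow> 'a::comm_ring_1"
  assumes "x \<in> vecs n" and "k \<in> {1..n}"
  shows "J n x (indicator {k}) = x (k - 1) - x (k + 1)"
  using assms by (simp add: J_eq_sum_left indicator_def)

lemma J_indicator_evens_right:
  fixes x :: "nat \<Rightarrow> 'a::comm_ring_1"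
  assumes "x \<in> vecs n" and "even n"
  shows "J n x (indicator {j \<in> {1..n}. even j}) = x 1"
proof -
  let ?e = "indicator {j \<in> {1..n}. even j} :: nat \<Rightarrow> 'a"
  have "?e \<in> vecs n" by (rule indicator_vecs) auto
  then have "J n x ?e = (\<Sum>j = 1..n. x j * (?e (j + 1) - ?e (j - 1)))"
    by (rule J_eq_sum_right)
  also have "\<dots> = (\<Sum>j = 1..n. if j = 1 then x 1 else 0)"
  proof (rule sum.cong)
    fix j assume j: "j \<in> {1..n}"
    have "j + 1 \<le> n" if "odd j"
      using j that \<open>even n\<close> by (cases "j = n") auto
    with j show "x j * (?e (j + 1) - ?e (j - 1)) = (if j = 1 then x 1 else 0)"
      by (cases "even j") (auto simp: indicator_def)
  qed simp
  also have "\<dots> = x 1"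
    using assms(1) by (cases "n = 0") (simp_all add: vecs_def)
  finally show ?thesis .
qed

lemma sigma_eq_transvection:
  assumes "2 \<le> i" "i \<le> n" and x: "x \<in> vecs n"
  shows "sigma n i x = transvection n 1 (indicator {i - 1}) x"
proof -
  have "i - 1 \<in> {1..n}" "i - 1 - 1 = i - 2" "i - 1 + 1 = i"
    using assms(1,2) by auto
  then have "J n x (indicator {i - 1}) = x (i - 2) - x i"
    using J_indicator_right[OF x] by metis
  then show ?thesis
    using assms by (auto simp: sigma_def transvection_def vecs_def indicator_def)
qed

lemma sigma_1_eq_transvection:
  assumes "even n" and x: "x \<in> vecs n"
  shows "sigma n 1 x = transvection n 1 (indicator {j \<in> {1..n}. even j}) x"
  using x J_indicator_evens_right[OF x \<open>even n\<close>]
  by (auto simp: sigma_def transvection_def vecs_def indicator_def)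

lemma sigma_is_transvection:
  assumes "1 \<le> i" "i \<le> n" and "i = 1 \<Longrightarrow> even n"
  obtains u where "u \<in> vecs n" and "\<And>x. x \<in> vecs n \<Longrightarrow> sigma n i x = transvection n 1 u x"
proof (cases "i = 1")
  case True
  show ?thesis
  proof (rule that)
    show "indicator {j \<in> {1..n}. even j} \<in> vecs n"
      by (rule indicator_vecs) auto
    show "sigma n i x = transvection n 1 (indicator {j \<in> {1..n}. even j}) x" if "x \<in> vecs n" for x
      using sigma_1_eq_transvection[OF assms(3)[OF True] that] True by simp
  qed
next
  case False
  show ?thesis
  proof (rule that)
    show "indicator {i - 1} \<in> vecs n"
      using assms(1,2) False by (intro indicator_vecs) auto
    show "sigma n i x = transvection n 1 (indicator {i - 1}) x" if "x \<in> vecs n" for x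
      using sigma_eq_transvection[OF _ assms(2) that] assms(1) False by simp
  qed
qed

lemma preserves_J_sigma:
  assumes "1 \<le> i" "i \<le> n" and "i = 1 \<Longrightarrow> even n"
  shows "preserves_J n (sigma n i)" and "preserves_J n (the_inv_into (vecs n) (sigma n i))"
proof -
  obtain u where u: "u \<in> vecs n"
    and sigma: "\<And>x. x \<in> vecs n \<Longrightarrow> sigma n i x = transvection n 1 u x"
    using sigma_is_transvection[OF assms] by blast
  show "preserves_J n (sigma n i)"
    using preserves_J_transvection[OF u] sigma by (rule preserves_J_cong)
  show "preserves_J n (the_inv_into (vecs n) (sigma n i))"
    using preserves_J_transvection[OF u] the_inv_into_transvection[OF u sigma]
    by (rule preserves_J_cong)
qed

lemma preserves_J_Ggroup:
  assumes "even n" and "g \<in> Ggroup n"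
  shows "preserves_J n g"
  using assms(2)
proof induction
  case id_in
  show ?case by (rule preserves_J_id)
next
  case (gen g i)
  then have "preserves_J n (sigma n i)"
    using assms(1) by (intro preserves_J_sigma(1)) auto
  then show ?case using gen.IH by (rule preserves_J_comp)
next
  case (gen_inv g i)
  then have "preserves_J n (the_inv_into (vecs n) (sigma n i))"
    using assms(1) by (intro preserves_J_sigma(2)) auto
  then show ?case using gen_inv.IH by (rule preserves_J_comp)
qed

lemma Jker_eq: "Jker n = {x \<in> vecs n. \<forall>k \<in> {1..n}. x (k - 1) = x (k + 1)}"
proof (intro set_eqI iffI)
  fix x :: "nat \<Rightarrow> rat"
  assume x: "x \<in> Jker n"
  then have "x \<in> vecs n" by (simp add: Jker_def)
  moreover have "x (k - 1) = x (k + 1)" if "k \<in> {1..n}" for k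
  proof -
    have "(indicator {k} :: nat \<Rightarrow> rat) \<in> vecs n" using that by (intro indicator_vecs) auto
    then have "J n x (indicator {k}) = 0" using x by (simp add: Jker_def)
    then show ?thesis
      using J_indicator_right[OF \<open>x \<in> vecs n\<close> that] by simp
  qed
  ultimately show "x \<in> {x \<in> vecs n. \<forall>k \<in> {1..n}. x (k - 1) = x (k + 1)}" by blast
next
  fix x :: "nat \<Rightarrow> rat"
  assume "x \<in> {x \<in> vecs n. \<forall>k \<in> {1..n}. x (k - 1) = x (k + 1)}"
  then show "x \<in> Jker n"
    by (simp add: Jker_def J_eq_sum_left)
qed

lemma Jker_parity:
  assumes "x \<in> Jker n"
  shows "j \<le> n + 1 \<Longrightarrow> x j = (if even j then 0 else x 1)"
proof (induction j rule: nat_induct2)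
  case 0
  then show ?case using assms by (simp add: Jker_def vecs_def)
next
  case (step j)
  have "j + 1 \<in> {1..n}" using step.prems by auto
  then have "x (j + 1 - 1) = x (j + 1 + 1)"
    using assms unfolding Jker_eq by blast
  with step show ?case by simp
qed simp

lemma Jker_even:
  assumes "even n"
  shows "Jker n = {\<lambda>_. 0}"
proof -
  have "x j = 0" if x: "x \<in> Jker n" for x j
  proof -
    have vec: "x \<in> vecs n" using x by (simp add: Jker_def)
    have "x 1 = x (n + 1)" using Jker_parity[OF x, of "n + 1"] assms by simp
    also have "\<dots> = 0" using vec by (simp add: vecs_def)
    finally have "x 1 = 0" .
    then show ?thesis
      using Jker_parity[OF x, of j] vec by (cases "j \<le> n") (simp_all add: vecs_def)
  qed
  moreover have "(\<lambda>_. 0) \<in> Jker n" by (simp add: Jker_eq vecs_def)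
  ultimately show ?thesis by blast
qed

lemma Jker_odd:
  assumes "odd n"
  shows "Jker n = range (\<lambda>c j. c * indicator {j \<in> {1..n}. odd j} j)"
proof
  show "Jker n \<subseteq> range (\<lambda>c j. c * indicator {j \<in> {1..n}. odd j} j)"
  proof
    fix x assume x: "x \<in> Jker n"
    have "x j = x 1 * indicator {j \<in> {1..n}. odd j} j" for j
    proof (cases "1 \<le> j \<and> j \<le> n")
      case True
      then show ?thesis using Jker_parity[OF x, of j] by simp
    next
      case False
      then have j: "j \<notin> {1..n}" by simp
      have "x \<in> vecs n" using x by (simp add: Jker_def)
      with j show ?thesis using vecs_outside[of x n j] by (auto simp: indicator_def)
    qed
    then show "x \<in> range (\<lambda>c j. c * indicator {j \<in> {1..n}. odd j} j)" by blast
  qed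
  show "range (\<lambda>c j. c * indicator {j \<in> {1..n}. odd j} j) \<subseteq> Jker n"
  proof (rule image_subsetI)
    fix c :: rat
    let ?v = "indicator {j \<in> {1..n}. odd j} :: nat \<Rightarrow> rat"
    have "?v (k - 1) = ?v (k + 1)" if k: "k \<in> {1..n}" for k
    proof (cases "even k")
      case True
      then have "k + 1 \<le> n" using k assms by (cases "k = n") auto
      with k True show ?thesis by (auto simp: indicator_def)
    next
      case False
      with k show ?thesis by (auto simp: indicator_def)
    qed
    moreover have "(\<lambda>j. c * ?v j) \<in> vecs n" by (simp add: vecs_def)
    ultimately show "(\<lambda>j. c * ?v j) \<in> Jker n" by (simp add: Jker_eq)
  qed
qed

theorem mainTheorem3:
  fixes n :: nat
  assumes "n \<ge> 1"
  shows "(even n \<longrightarrow>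
            Jker n = {(\<lambda>_. 0)} \<and>
            (\<forall>g \<in> Ggroup n. \<forall>x \<in> vecs n. \<forall>y \<in> vecs n. J n (g x) (g y) = J n x y))
       \<and> (odd n \<longrightarrow>
            (\<forall>i. 2 \<le> i \<and> i \<le> n \<longrightarrow>
               (\<forall>x \<in> vecs n. \<forall>y \<in> vecs n. J n (sigma n i x) (sigma n i y) = J n x y))
            \<and> (\<exists>v \<in> vecs n. v \<noteq> (\<lambda>_. 0) \<and> Jker n = range (\<lambda>c::rat. (\<lambda>j. c * v j))))"
proof (intro conjI impI allI)
  assume "even n"
  then show "Jker n = {(\<lambda>_. 0)}"
    by (rule Jker_even)
  show "\<forall>g \<in> Ggroup n. \<forall>x \<in> vecs n. \<forall>y \<in> vecs n. J n (g x) (g y) = J n x y"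
    using preserves_J_Ggroup[OF \<open>even n\<close>] by (simp add: preserves_J_def)
next
  fix i assume "2 \<le> i \<and> i \<le> n"
  then have "preserves_J n (sigma n i)"
    by (intro preserves_J_sigma(1)) auto
  then show "\<forall>x \<in> vecs n. \<forall>y \<in> vecs n. J n (sigma n i x) (sigma n i y) = J n x y"
    by (simp add: preserves_J_def)
next
  assume "odd n"
  let ?v = "indicator {j \<in> {1..n}. odd j} :: nat \<Rightarrow> rat"
  have "?v \<in> vecs n" by (rule indicator_vecs) auto
  moreover have "?v \<noteq> (\<lambda>_. 0)"
    using assms by (auto dest: fun_cong[where x = 1])
  ultimately show "\<exists>v \<in> vecs n. v \<noteq> (\<lambda>_. 0) \<and> Jker n = range (\<lambda>c::rat. (\<lambda>j. c * v j))"
    using Jker_odd[OF \<open>odd n\<close>] by blast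
qed

end
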